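(* Let $V_1,V_2$ be Orlicz functions such that $V_1(x)/V_2(x)\to\infty$ as $|x|\to\infty$ and $\int_{\mathbb R}V_1(x)e^{\alpha V_2(x)}dx<\infty$ for all $\alpha\in(-\infty,0)$. For $R>0$ let $\alpha(R)\in(-\infty,0)$ be the (unique) solution of $R=\int_{\mathbb R}V_2\,d\mu_{V_2,\alpha(R)}$. Then there exists $\overline R\in(0,\infty)$ such that for all $0<R\le\overline R$, $$m_{V_1}(\mu_{V_2,\alpha(R)})\le m_{V_1}(\mu_{V_2,\alpha(\overline R)})=1.$$
   Context: An Orlicz function is a convex, symmetric function $V:\mathbb R\to[0,\infty)$ with $V(0)=0$ and $V(x)>0$ for $x\ne0$. For $\beta<0$, $\mu_{V,\beta}$ is the probability measure with Lebesgue density $e^{\beta V(x)}/\int_{\mathbb R}e^{\beta V(t)}dt$. $m_V(\mu):=\int V\,d\mu$. *)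

theory Defs
  imports "HOL-Analysis.Analysis"
begin

definition orlicz :: "(real \<Rightarrow> real) \<Rightarrow> bool" where
  "orlicz V \<longleftrightarrow> convex_on UNIV V \<and> (\<forall>x. V (- x) = V x) \<and> V 0 = 0 \<and> (\<forall>x. x \<noteq> 0 \<longrightarrow> V x > 0)"

definition gibbs_measure :: "(real \<Rightarrow> real) \<Rightarrow> real \<Rightarrow> real measure" where
  "gibbs_measure V \<beta> = density lborel (\<lambda>x. ennreal (exp (\<beta> * V x) / (\<integral>t. exp (\<beta> * V t) \<partial>lborel)))"

definition m_V :: "(real \<Rightarrow> real) \<Rightarrow> real measure \<Rightarrow> real" where
  "m_V V \<mu> = (\<integral>x. V x \<partial>\<mu>)"

end

theory Submission
  imports Defs "HOL-Probability.Distributions" "HOL-Real_Asymp.Real_Asymp"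
begin

text \<open>
  For \<open>b < 0\<close> let \<open>F b = m_V V1 (gibbs_measure V2 b)\<close> and \<open>G b = m_V V2 (gibbs_measure V2 b)\<close>,
  so that \<open>G (\<alpha> R) = R\<close>. Passing from \<open>b\<^sub>1\<close> to \<open>b\<^sub>2\<close> multiplies the Gibbs density by
  \<open>exp ((b\<^sub>2 - b\<^sub>1) * V2 x)\<close>, a function of \<open>\<bar>x\<bar>\<close> ordered like \<open>V1 x\<close>; Chebyshev's integral
  inequality therefore makes \<open>F\<close> nondecreasing and \<open>G\<close> strictly increasing, hence \<open>\<alpha>\<close> and
  \<open>R \<mapsto> F (\<alpha> R)\<close> are nondecreasing. As \<open>b \<rightarrow> -\<infinity>\<close> the Gibbs measure concentrates at the
  origin and \<open>F b \<rightarrow> 0\<close>, whereas \<open>V2 \<le> V1 + C\<close> gives \<open>F (\<alpha> R) \<ge> R - C\<close>. By continuity \<open>F\<close>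
  takes the value 1 at some \<open>b\<close>, and \<open>G b\<close> is the required radius.
\<close>

lemma orlicz_continuous: "orlicz V \<Longrightarrow> continuous_on UNIV V"
  unfolding orlicz_def by (intro convex_on_continuous) auto

lemma orlicz_borel_measurable: "orlicz V \<Longrightarrow> V \<in> borel_measurable borel"
  by (intro borel_measurable_continuous_onI orlicz_continuous)

lemma orlicz_nonneg: "orlicz V \<Longrightarrow> 0 \<le> V x"
  unfolding orlicz_def by (cases "x = 0") (auto intro: less_imp_le)

lemma orlicz_abs: "orlicz V \<Longrightarrow> V \<bar>x\<bar> = V x"
  unfolding orlicz_def by (cases "0 \<le> x") auto

lemma orlicz_le_scaled:
  assumes "orlicz V" "0 \<le> s" "s \<le> t" "0 < t"
  shows "V s \<le> s / t * V t"
proof -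
  have "convex_on UNIV V" "V 0 = 0"
    using assms(1) unfolding orlicz_def by auto
  then have "V ((1 - s / t) *\<^sub>R 0 + (s / t) *\<^sub>R t) \<le> (1 - s / t) * V 0 + s / t * V t"
    using assms by (intro convex_onD) auto
  then show ?thesis
    using assms \<open>V 0 = 0\<close> by simp
qed

lemma orlicz_less:
  assumes "orlicz V" "\<bar>x\<bar> < \<bar>y\<bar>"
  shows "V x < V y"
proof -
  have "0 < V \<bar>y\<bar>"
    using assms unfolding orlicz_def by (metis abs_eq_0 abs_ge_zero not_less)
  have "V \<bar>x\<bar> \<le> \<bar>x\<bar> / \<bar>y\<bar> * V \<bar>y\<bar>"
    using assms by (intro orlicz_le_scaled) auto
  also have "\<dots> < V \<bar>y\<bar>"
    using \<open>0 < V \<bar>y\<bar>\<close> assms(2) by (simp add: field_simps)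
  finally show ?thesis
    using assms(1) by (simp add: orlicz_abs)
qed

lemma orlicz_less_iff: "orlicz V \<Longrightarrow> V x < V y \<longleftrightarrow> \<bar>x\<bar> < \<bar>y\<bar>"
  by (metis orlicz_less orlicz_abs linorder_neqE_linordered_idom less_asym less_irrefl)

lemma orlicz_le_iff: "orlicz V \<Longrightarrow> V x \<le> V y \<longleftrightarrow> \<bar>x\<bar> \<le> \<bar>y\<bar>"
  by (simp add: not_less[symmetric] orlicz_less_iff)

lemma orlicz_linear_growth:
  assumes "orlicz V"
  shows "V 1 * (\<bar>x\<bar> - 1) \<le> V x"
proof (cases "1 \<le> \<bar>x\<bar>")
  case True
  then have "V 1 \<le> 1 / \<bar>x\<bar> * V \<bar>x\<bar>"
    using assms by (intro orlicz_le_scaled) auto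
  then have "V 1 * \<bar>x\<bar> \<le> V x"
    using True assms by (simp add: field_simps orlicz_abs)
  then show ?thesis
    using orlicz_nonneg[OF assms, of 1] by (simp add: algebra_simps)
next
  case False
  then show ?thesis
    using orlicz_nonneg[OF assms, of 1] orlicz_nonneg[OF assms, of x]
    by (simp add: mult_nonneg_nonpos order_trans[of _ 0])
qed

lemma orlicz_unbounded:
  assumes "orlicz V"
  shows "\<exists>x. M < V x"
proof -
  have "0 < V 1"
    using assms unfolding orlicz_def by auto
  define x where "x = \<bar>M\<bar> / V 1 + 2"
  have "V 1 * (\<bar>x\<bar> - 1) = \<bar>M\<bar> + V 1"
    using \<open>0 < V 1\<close> by (simp add: x_def field_simps)
  then show ?thesis
    using orlicz_linear_growth[OF assms, of x] \<open>0 < V 1\<close> by (intro exI[of _ x]) linarith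
qed

lemma orlicz_small_value:
  assumes "orlicz V" "0 < e"
  shows "\<exists>\<delta>>0. V \<delta> < e"
proof -
  have "(V \<longlongrightarrow> V 0) (at_right 0)"
    using orlicz_continuous[OF assms(1)] by (metis continuous_on_def UNIV_I tendsto_within_subset subset_UNIV)
  then have "\<forall>\<^sub>F x in at_right 0. V x < e"
    using assms unfolding orlicz_def by (simp add: order_tendstoD)
  then obtain r where "0 < r" "\<And>y. 0 < y \<Longrightarrow> y < r \<Longrightarrow> V y < e"
    unfolding eventually_at_right_field by blast
  then show ?thesis
    by (intro exI[of _ "r / 2"]) auto
qed

lemma orlicz_le_add_const:
  assumes "orlicz V1" "orlicz V2" "filterlim (\<lambda>x. V1 x / V2 x) at_top at_infinity"
  shows "\<exists>C. \<forall>x. V2 x \<le> V1 x + C"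
proof -
  have "\<forall>\<^sub>F x in at_infinity. 1 \<le> V1 x / V2 x"
    using assms(3) by (simp add: filterlim_at_top)
  then obtain r where r: "\<And>x. r \<le> norm x \<Longrightarrow> 1 \<le> V1 x / V2 x"
    unfolding eventually_at_infinity by blast
  have "V2 x \<le> V1 x + V2 r" for x
  proof (cases "\<bar>r\<bar> \<le> \<bar>x\<bar>")
    case True
    then have "1 \<le> V1 x / V2 x"
      using r by simp
    then have "V2 x \<le> V1 x"
      using orlicz_nonneg[OF assms(2), of x] by (simp add: le_divide_eq split: if_splits)
    then show ?thesis
      using orlicz_nonneg[OF assms(2), of r] by simp
  next
    case False
    then show ?thesis
      using assms(1,2) by (simp add: orlicz_le_iff orlicz_nonneg add_increasing)
  qed
  then show ?thesis by blast
qed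

lemma integrable_exp_neg_abs: "integrable lborel (\<lambda>x::real. exp (- \<bar>x\<bar>))"
proof -
  have "integrable lborel (exponential_density 1)"
    using nn_integral_erlang_ith_moment[of 1 0 0]
    by (intro integrableI_nonneg) (auto simp: exponential_density_nonneg)
  moreover from this have "integrable lborel (\<lambda>x. exponential_density 1 (0 + (- 1) * x))"
    by (subst lborel_integrable_real_affine_iff) auto
  ultimately have "integrable lborel (\<lambda>x. exponential_density 1 x + exponential_density 1 (- x))"
    by simp
  then show ?thesis
    by (rule Bochner_Integration.integrable_bound)
       (auto simp: exponential_density_def exponential_density_nonneg)
qed

lemma orlicz_integrable_exp:
  assumes "orlicz V" "a < 0"
  shows "integrable lborel (\<lambda>x. exp (a * V x))"
proof -
  define c where "c = - a * V 1"
  have "0 < V 1"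
    using assms(1) unfolding orlicz_def by simp
  then have "0 < c"
    using assms(2) by (simp add: c_def mult_neg_pos)
  have "integrable lborel (\<lambda>x. exp (- \<bar>0 + c * x\<bar>))"
    using \<open>0 < c\<close> integrable_exp_neg_abs by (subst lborel_integrable_real_affine_iff) auto
  then have "integrable lborel (\<lambda>x. exp c * exp (- \<bar>c * x\<bar>))"
    by simp
  moreover have "exp (a * V x) \<le> exp c * exp (- \<bar>c * x\<bar>)" for x
  proof -
    have "a * V x \<le> a * (V 1 * (\<bar>x\<bar> - 1))"
      using assms by (intro mult_left_mono_neg orlicz_linear_growth) auto
    also have "\<dots> = c + - \<bar>c * x\<bar>"
      using \<open>0 < c\<close> by (simp add: abs_mult) (simp add: c_def algebra_simps)
    finally show ?thesis
      by (simp flip: exp_add)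
  qed
  ultimately show ?thesis
    using orlicz_borel_measurable[OF assms(1)]
    by (elim Bochner_Integration.integrable_bound) auto
qed

lemma orlicz_integrable_mult_exp:
  assumes "orlicz V" "a < 0"
  shows "integrable lborel (\<lambda>x. V x * exp (a * V x))"
proof -
  have "integrable lborel (\<lambda>x. 2 / - a * exp (a / 2 * V x))"
    using assms by (intro integrable_mult_right orlicz_integrable_exp) auto
  moreover have "V x * exp (a * V x) \<le> 2 / - a * exp (a / 2 * V x)" for x
  proof -
    have "- a / 2 * V x \<le> exp (- a / 2 * V x)"
      using exp_ge_add_one_self[of "- a / 2 * V x"] by linarith
    then have "V x \<le> 2 / - a * exp (- a / 2 * V x)"
      using assms(2) by (simp add: field_simps)
    then have "V x * exp (a * V x) \<le> 2 / - a * exp (- a / 2 * V x) * exp (a * V x)"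
      by (intro mult_right_mono) auto
    also have "\<dots> = 2 / - a * exp (a / 2 * V x)"
      by (simp add: mult.assoc flip: exp_add)
    finally show ?thesis .
  qed
  ultimately show ?thesis
    using assms orlicz_borel_measurable[OF assms(1)] orlicz_nonneg[OF assms(1)]
    by (elim Bochner_Integration.integrable_bound) (auto simp: abs_of_neg)
qed

lemma integral_pos_continuous:
  fixes g :: "'a::euclidean_space \<Rightarrow> real"
  assumes "continuous_on UNIV g" "\<And>x. 0 \<le> g x" "integrable lborel g" "0 < g x0"
  shows "0 < integral\<^sup>L lborel g"
proof -
  have "open {x. 0 < g x}"
    using assms(1) by (intro open_Collect_less) (auto intro: continuous_intros)
  then have "\<not> negligible {x. 0 < g x}"
    using assms(4) by (intro open_not_negligible) auto
  then have "{x. 0 < g x} \<notin> null_sets lborel"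
    by (auto simp: negligible_iff_null_sets dest: null_sets_completionI)
  moreover have "{x. 0 < g x} \<in> sets lborel"
    using borel_measurable_continuous_onI[OF assms(1)] by measurable
  ultimately have "\<not> (AE x in lborel. g x = 0)"
    using AE_iff_null_sets[of "{x. 0 < g x}" lborel]
    by (metis (mono_tags, lifting) eventually_mono less_irrefl mem_Collect_eq)
  then have "integral\<^sup>L lborel g \<noteq> 0"
    using assms(2,3) by (subst integral_nonneg_eq_0_iff_AE) auto
  moreover have "0 \<le> integral\<^sup>L lborel g"
    using assms(2) by (intro integral_nonneg_AE) auto
  ultimately show ?thesis
    by simp
qed

definition partition_function :: "(real \<Rightarrow> real) \<Rightarrow> real \<Rightarrow> real" where
  "partition_function V b = (\<integral>x. exp (b * V x) \<partial>lborel)"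

lemma partition_function_lower_bound:
  assumes "orlicz V" "b < 0" "0 < r"
  shows "2 * r * exp (b * V r) \<le> partition_function V b"
proof -
  have "indicator {-r..r} x * exp (b * V r) \<le> exp (b * V x)" for x
  proof (cases "\<bar>x\<bar> \<le> r")
    case True
    then have "b * V r \<le> b * V x"
      using assms by (intro mult_left_mono_neg) (auto simp: orlicz_le_iff)
    then show ?thesis
      using True by (simp add: abs_le_iff)
  qed (auto simp: indicator_def abs_le_iff)
  then have "(\<integral>x. indicator {-r..r} x * exp (b * V r) \<partial>lborel) \<le> partition_function V b"
    unfolding partition_function_def using assms orlicz_integrable_exp
    by (intro integral_mono integrable_mult_left integrable_real_indicator) auto
  then show ?thesis
    using assms(3) by (simp add: measure_def)
qed

lemma partition_function_pos: "orlicz V \<Longrightarrow> b < 0 \<Longrightarrow> 0 < partition_function V b"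
  using partition_function_lower_bound[of V b 1] exp_gt_zero[of "b * V 1"] by linarith

lemma m_V_gibbs_measure:
  assumes "orlicz V" "f \<in> borel_measurable borel"
  shows "m_V f (gibbs_measure V b) = (\<integral>x. f x * exp (b * V x) \<partial>lborel) / partition_function V b"
proof -
  have "partition_function V b \<ge> 0"
    unfolding partition_function_def by (intro integral_nonneg_AE) simp
  then have "m_V f (gibbs_measure V b) = (\<integral>x. exp (b * V x) / partition_function V b * f x \<partial>lborel)"
    unfolding m_V_def gibbs_measure_def partition_function_def[symmetric]
    using assms orlicz_borel_measurable[OF assms(1)] by (subst integral_density) auto
  then show ?thesis
    by (simp add: mult.commute)
qed

lemma integrable_gibbs_measure_iff:
  assumes "orlicz V" "f \<in> borel_measurable borel" "b < 0"
  shows "integrable (gibbs_measure V b) f \<longleftrightarrow> integrable lborel (\<lambda>x. f x * exp (b * V x))"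
proof -
  have "0 < partition_function V b"
    using assms by (intro partition_function_pos)
  then have "integrable (gibbs_measure V b) f \<longleftrightarrow>
      integrable lborel (\<lambda>x. f x * exp (b * V x) * (1 / partition_function V b))"
    unfolding gibbs_measure_def partition_function_def[symmetric]
    using assms orlicz_borel_measurable[OF assms(1)]
    by (subst integrable_density) (auto simp: mult_ac)
  then show ?thesis
    using \<open>0 < partition_function V b\<close>
      integrable_mult_right_iff[of lborel "\<lambda>x. f x * exp (b * V x)" "1 / partition_function V b"]
    by simp
qed

lemma prob_space_gibbs_measure:
  assumes "orlicz V" "b < 0"
  shows "prob_space (gibbs_measure V b)"
proof
  have "0 < partition_function V b"
    using assms by (intro partition_function_pos)
  have "emeasure (gibbs_measure V b) UNIV = (\<integral>\<^sup>+x. ennreal (exp (b * V x) / partition_function V b) \<partial>lborel)"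
    unfolding gibbs_measure_def partition_function_def[symmetric]
    using orlicz_borel_measurable[OF assms(1)] by (simp add: emeasure_density)
  also have "\<dots> = ennreal (\<integral>x. exp (b * V x) / partition_function V b \<partial>lborel)"
    using assms \<open>0 < partition_function V b\<close> orlicz_integrable_exp
    by (intro nn_integral_eq_integral) auto
  finally show "emeasure (gibbs_measure V b) (space (gibbs_measure V b)) = 1"
    using \<open>0 < partition_function V b\<close> by (simp add: gibbs_measure_def partition_function_def)
qed

lemma m_V_gibbs_measure_reweight:
  assumes "orlicz V" "f \<in> borel_measurable borel" "b + c < 0"
  shows "m_V (\<lambda>x. f x * exp (c * V x)) (gibbs_measure V b) =
    partition_function V (b + c) / partition_function V b * m_V f (gibbs_measure V (b + c))"
proof -
  have "0 < partition_function V (b + c)"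
    using assms by (intro partition_function_pos)
  moreover have "(\<lambda>x. f x * exp (c * V x) * exp (b * V x)) = (\<lambda>x. f x * exp ((b + c) * V x))"
    by (simp add: algebra_simps flip: exp_add)
  ultimately show ?thesis
    using assms orlicz_borel_measurable[OF assms(1)] by (simp add: m_V_gibbs_measure)
qed

lemma integrable_gibbs_measure_reweight:
  assumes "orlicz V" "f \<in> borel_measurable borel" "b < 0" "b + c < 0"
    and "integrable lborel (\<lambda>x. f x * exp ((b + c) * V x))"
  shows "integrable (gibbs_measure V b) (\<lambda>x. f x * exp (c * V x))"
proof -
  have "(\<lambda>x. f x * exp (c * V x) * exp (b * V x)) = (\<lambda>x. f x * exp ((b + c) * V x))"
    by (simp add: algebra_simps flip: exp_add)
  then show ?thesis
    using assms orlicz_borel_measurable[OF assms(1)] by (simp add: integrable_gibbs_measure_iff)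
qed

section \<open>Chebyshev's integral inequality\<close>

lemma similarly_ordered_threshold:
  fixes f h :: "'a \<Rightarrow> real"
  assumes ord: "\<And>x y. x \<in> S \<Longrightarrow> y \<in> S \<Longrightarrow> f x < f y \<Longrightarrow> h x \<le> h y"
    and "y0 \<in> S" "m \<le> f y0" "y1 \<in> S" "f y1 \<le> m"
  shows "\<exists>c. \<forall>x\<in>S. 0 \<le> (f x - m) * (h x - c)"
proof (cases "\<exists>x\<in>S. f x < m")
  case False
  have "0 \<le> (f x - m) * (h x - h y1)" if "x \<in> S" for x
  proof (cases "f x = m")
    case False
    then have "f y1 < f x" "m < f x"
      using \<open>\<not> (\<exists>x\<in>S. f x < m)\<close> \<open>x \<in> S\<close> \<open>f y1 \<le> m\<close> by force+
    then show ?thesis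
      using ord[of y1 x] \<open>y1 \<in> S\<close> \<open>x \<in> S\<close> by simp
  qed simp
  then show ?thesis by blast
next
  case True
  let ?L = "h ` {x\<in>S. f x < m}"
  have "bdd_above ?L"
    using ord \<open>y0 \<in> S\<close> \<open>m \<le> f y0\<close> by (intro bdd_aboveI2[of _ _ "h y0"]) force
  have "0 \<le> (f x - m) * (h x - Sup ?L)" if "x \<in> S" for x
  proof (cases "f x < m")
    case True
    then have "h x \<le> Sup ?L"
      using \<open>bdd_above ?L\<close> \<open>x \<in> S\<close> by (intro cSup_upper) auto
    then show ?thesis
      using True by (intro mult_nonpos_nonpos) auto
  next
    case False
    then have "Sup ?L \<le> h x"
      using \<open>\<exists>x\<in>S. f x < m\<close> ord \<open>x \<in> S\<close> by (intro cSup_least) force+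
    then show ?thesis
      using False by (intro mult_nonneg_nonneg) auto
  qed
  then show ?thesis by blast
qed

lemma (in prob_space) chebyshev_integral_inequality:
  fixes f h :: "'a \<Rightarrow> real"
  assumes "integrable M f" "integrable M h" "integrable M (\<lambda>x. f x * h x)"
    and ord: "\<And>x y. x \<in> space M \<Longrightarrow> y \<in> space M \<Longrightarrow> f x < f y \<Longrightarrow> h x \<le> h y"
  shows "expectation f * expectation h \<le> expectation (\<lambda>x. f x * h x)"
proof -
  let ?m = "expectation f"
  have "\<exists>y0\<in>space M. ?m \<le> f y0"
  proof (rule ccontr)
    assume "\<not> (\<exists>y0\<in>space M. ?m \<le> f y0)"
    then have "expectation f < expectation (\<lambda>_. ?m)"
      using assms(1) by (intro integral_less_AE_space) (auto simp: not_le emeasure_space_1)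
    then show False
      by (simp add: prob_space)
  qed
  moreover have "\<exists>y1\<in>space M. f y1 \<le> ?m"
  proof (rule ccontr)
    assume "\<not> (\<exists>y1\<in>space M. f y1 \<le> ?m)"
    then have "expectation (\<lambda>_. ?m) < expectation f"
      using assms(1) by (intro integral_less_AE_space) (auto simp: not_le emeasure_space_1)
    then show False
      by (simp add: prob_space)
  qed
  \<comment> \<open>\<open>c\<close> separates the values of \<open>h\<close> below and above the mean of \<open>f\<close>\<close>
  ultimately obtain c where c: "\<forall>x\<in>space M. 0 \<le> (f x - ?m) * (h x - c)"
    using similarly_ordered_threshold[of "space M" f h] ord by metis
  have "0 \<le> expectation (\<lambda>x. (f x - ?m) * (h x - c))"
    using c by (intro integral_nonneg_AE) auto
  also have "(\<lambda>x. (f x - ?m) * (h x - c)) = (\<lambda>x. f x * h x - ?m * h x - c * f x + ?m * c)"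
    by (auto simp: algebra_simps)
  also have "expectation \<dots> = expectation (\<lambda>x. f x * h x) - ?m * expectation h"
    using assms(1-3) by (simp add: prob_space)
  finally show ?thesis
    by simp
qed

section \<open>Dependence of the moments on the inverse temperature\<close>

lemma gibbs_moment_mono:
  assumes V: "orlicz V" and f: "f \<in> borel_measurable borel"
    and ord: "\<And>x y. f x < f y \<Longrightarrow> V x \<le> V y"
    and f_int: "\<And>a. a < 0 \<Longrightarrow> integrable lborel (\<lambda>x. f x * exp (a * V x))"
  shows "mono_on {..<0} (\<lambda>b. m_V f (gibbs_measure V b))"
proof (rule mono_onI)
  fix b1 b2 :: real
  assume "b1 \<in> {..<0}" "b2 \<in> {..<0}" "b1 \<le> b2"
  then have "b1 < 0" "b2 < 0"
    by auto
  define c where "c = b2 - b1"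
  define h where "h x = exp (c * V x)" for x
  interpret prob_space "gibbs_measure V b1"
    using V \<open>b1 < 0\<close> by (rule prob_space_gibbs_measure)
  have "integrable (gibbs_measure V b1) f"
    using f_int[OF \<open>b1 < 0\<close>] V \<open>b1 < 0\<close> f by (simp add: integrable_gibbs_measure_iff)
  moreover have "integrable (gibbs_measure V b1) h"
    unfolding h_def[abs_def] c_def
    using integrable_gibbs_measure_reweight[OF V _ \<open>b1 < 0\<close>, of "\<lambda>_. 1" c]
      orlicz_integrable_exp[OF V \<open>b2 < 0\<close>] \<open>b2 < 0\<close> by (simp add: c_def)
  moreover have "integrable (gibbs_measure V b1) (\<lambda>x. f x * h x)"
    using integrable_gibbs_measure_reweight[OF V f \<open>b1 < 0\<close>, of c] f_int[OF \<open>b2 < 0\<close>] \<open>b2 < 0\<close>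
    by (simp add: h_def c_def)
  moreover have "h x \<le> h y" if "f x < f y" for x y
    using ord[OF that] \<open>b1 \<le> b2\<close> by (simp add: h_def c_def mult_left_mono)
  ultimately have "m_V f (gibbs_measure V b1) * m_V h (gibbs_measure V b1) \<le>
      m_V (\<lambda>x. f x * h x) (gibbs_measure V b1)"
    unfolding m_V_def by (intro chebyshev_integral_inequality)
  also have "m_V (\<lambda>x. f x * h x) (gibbs_measure V b1) =
      partition_function V b2 / partition_function V b1 * m_V f (gibbs_measure V b2)"
    using m_V_gibbs_measure_reweight[OF V f, of b1 c] \<open>b2 < 0\<close> by (simp add: h_def c_def)
  also have "m_V h (gibbs_measure V b1) = partition_function V b2 / partition_function V b1"
    using m_V_gibbs_measure_reweight[OF V, of "\<lambda>_. 1" b1 c] \<open>b2 < 0\<close>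
      prob_space.prob_space[OF prob_space_gibbs_measure[OF V \<open>b2 < 0\<close>]]
    by (simp add: h_def c_def m_V_def)
  finally show "m_V f (gibbs_measure V b1) \<le> m_V f (gibbs_measure V b2)"
    using partition_function_pos[OF V \<open>b1 < 0\<close>] partition_function_pos[OF V \<open>b2 < 0\<close>]
    by (simp add: mult.commute divide_le_cancel mult_le_cancel_left_pos)
qed

lemma integral_energy_covariance_pos:
  assumes V: "orlicz V" and "0 < c"
    and "integrable lborel (\<lambda>x. (V x - m) * (exp (c * V x) - exp (c * m)) * exp (b * V x))"
  shows "0 < (\<integral>x. (V x - m) * (exp (c * V x) - exp (c * m)) * exp (b * V x) \<partial>lborel)"
proof -
  obtain x0 where "m < V x0"
    using orlicz_unbounded[OF V] by blast
  show ?thesis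
  proof (rule integral_pos_continuous[of _ x0])
    show "continuous_on UNIV (\<lambda>x. (V x - m) * (exp (c * V x) - exp (c * m)) * exp (b * V x))"
      using orlicz_continuous[OF V] by (intro continuous_intros)
    show "0 \<le> (V x - m) * (exp (c * V x) - exp (c * m)) * exp (b * V x)" for x
    proof -
      have "0 \<le> (V x - m) * (exp (c * V x) - exp (c * m))"
        using \<open>0 < c\<close> by (cases "m \<le> V x") (auto intro: mult_nonneg_nonneg mult_nonpos_nonpos)
      then show ?thesis
        by simp
    qed
    show "0 < (V x0 - m) * (exp (c * V x0) - exp (c * m)) * exp (b * V x0)"
      using \<open>m < V x0\<close> \<open>0 < c\<close> by simp
  qed fact
qed

lemma gibbs_energy_strict_mono:
  assumes V: "orlicz V"
  shows "strict_mono_on {..<0} (\<lambda>b. m_V V (gibbs_measure V b))"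
proof (rule strict_mono_onI)
  fix b1 b2 :: real
  assume "b1 \<in> {..<0}" "b2 \<in> {..<0}" "b1 < b2"
  then have "b1 < 0" "b2 < 0"
    by auto
  let ?Z = "partition_function V" and ?N = "\<lambda>b. \<integral>x. V x * exp (b * V x) \<partial>lborel"
  define m where "m = m_V V (gibbs_measure V b1)"
  define c where "c = b2 - b1"
  define g where "g x = (V x - m) * (exp (c * V x) - exp (c * m)) * exp (b1 * V x)" for x
  have m: "m = ?N b1 / ?Z b1" and "0 < ?Z b1" "0 < ?Z b2"
    using V \<open>b1 < 0\<close> \<open>b2 < 0\<close>
    by (simp_all add: m_def m_V_gibbs_measure orlicz_borel_measurable partition_function_pos)
  have g_eq: "g = (\<lambda>x. V x * exp (b2 * V x) - m * exp (b2 * V x)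
      - exp (c * m) * (V x * exp (b1 * V x)) + m * exp (c * m) * exp (b1 * V x))"
    by (simp add: g_def c_def fun_eq_iff algebra_simps flip: exp_add)
  have ints: "integrable lborel (\<lambda>x. V x * exp (b * V x))" "integrable lborel (\<lambda>x. exp (b * V x))"
    if "b < 0" for b
    using V that by (simp_all add: orlicz_integrable_mult_exp orlicz_integrable_exp)
  note ints12 = ints[OF \<open>b1 < 0\<close>] ints[OF \<open>b2 < 0\<close>]
  have "0 < c"
    using \<open>b1 < b2\<close> by (simp add: c_def)
  have "integrable lborel g"
    unfolding g_eq using ints12 by simp
  then have "0 < integral\<^sup>L lborel g"
    unfolding g_def by (rule integral_energy_covariance_pos[OF V \<open>0 < c\<close>])
  moreover have "integral\<^sup>L lborel g = ?N b2 - m * ?Z b2 - exp (c * m) * (?N b1 - m * ?Z b1)"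
    unfolding g_eq partition_function_def using ints12
    by (simp add: Bochner_Integration.integral_add Bochner_Integration.integral_diff
        Bochner_Integration.integrable_diff right_diff_distrib)
  moreover have "?N b1 - m * ?Z b1 = 0"
    using \<open>0 < ?Z b1\<close> by (simp add: m)
  ultimately show "m_V V (gibbs_measure V b1) < m_V V (gibbs_measure V b2)"
    using \<open>0 < ?Z b2\<close> V
    by (simp add: m_def[symmetric] m_V_gibbs_measure orlicz_borel_measurable field_simps)
qed

lemma continuous_on_integral_exp_weight:
  fixes f g :: "'a \<Rightarrow> real"
  assumes [measurable]: "f \<in> borel_measurable M" "g \<in> borel_measurable M"
    and g_nonneg: "\<And>x. 0 \<le> g x" and "integrable M (\<lambda>x. f x * exp (c * g x))"
  shows "continuous_on {..c} (\<lambda>b. \<integral>x. f x * exp (b * g x) \<partial>M)"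
proof (rule continuous_on_sequentiallyI)
  fix u :: "nat \<Rightarrow> real" and a
  assume u: "\<forall>n. u n \<in> {..c}" "a \<in> {..c}" "u \<longlonglongrightarrow> a"
  show "(\<lambda>n. \<integral>x. f x * exp (u n * g x) \<partial>M) \<longlonglongrightarrow> \<integral>x. f x * exp (a * g x) \<partial>M"
  proof (rule integral_dominated_convergence[where w = "\<lambda>x. \<bar>f x\<bar> * exp (c * g x)"])
    show "integrable M (\<lambda>x. \<bar>f x\<bar> * exp (c * g x))"
      using integrable_abs[OF assms(4)] by (simp add: abs_mult)
    show "AE x in M. (\<lambda>n. f x * exp (u n * g x)) \<longlonglongrightarrow> f x * exp (a * g x)"
      using u(3) by (intro AE_I2 tendsto_intros)
    show "AE x in M. norm (f x * exp (u n * g x)) \<le> \<bar>f x\<bar> * exp (c * g x)" for n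
      using u(1) g_nonneg by (intro AE_I2) (auto simp: abs_mult intro!: mult_left_mono mult_right_mono)
  qed measurable
qed

lemma continuous_on_gibbs_moment:
  assumes V: "orlicz V" and [measurable]: "f \<in> borel_measurable borel"
    and f_int: "\<And>a. a < 0 \<Longrightarrow> integrable lborel (\<lambda>x. f x * exp (a * V x))"
  shows "continuous_on {..<0} (\<lambda>b. m_V f (gibbs_measure V b))"
proof -
  have [measurable]: "V \<in> borel_measurable borel"
    using V by (rule orlicz_borel_measurable)
  have "continuous_on {..<c} (\<lambda>b. m_V f (gibbs_measure V b))" if "c < 0" for c
  proof -
    have cont: "continuous_on {..<c} (\<lambda>b. \<integral>x. g x * exp (b * V x) \<partial>lborel)"
      if [measurable]: "g \<in> borel_measurable borel" and "integrable lborel (\<lambda>x. g x * exp (c * V x))"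
      for g :: "real \<Rightarrow> real"
      using that(2) V
      by (intro continuous_on_subset[OF continuous_on_integral_exp_weight]) (auto simp: orlicz_nonneg)
    have "continuous_on {..<c} (\<lambda>b. \<integral>x. f x * exp (b * V x) \<partial>lborel)"
      using f_int[OF that] by (intro cont) auto
    moreover have "continuous_on {..<c} (partition_function V)"
      using cont[of "\<lambda>_. 1"] orlicz_integrable_exp[OF V that]
      by (simp add: partition_function_def[abs_def])
    moreover have "partition_function V b \<noteq> 0" if "b < c" for b
      using partition_function_pos[OF V, of b] that \<open>c < 0\<close> by simp
    ultimately have "continuous_on {..<c} (\<lambda>b. (\<integral>x. f x * exp (b * V x) \<partial>lborel) / partition_function V b)"
      by (intro continuous_on_divide) auto
    then show ?thesis
      using V by (simp add: m_V_gibbs_measure)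
  qed
  moreover have "(\<Union>c\<in>{..<0}. {..<c}) = {..<(0::real)}"
  proof (intro equalityI subsetI)
    fix b :: real
    assume "b \<in> {..<0}"
    then show "b \<in> (\<Union>c\<in>{..<0}. {..<c})"
      by (intro UN_I[of "b / 2"]) auto
  qed auto
  ultimately show ?thesis
    using continuous_on_open_UN[of "{..<0}" "\<lambda>c. {..<c}" "\<lambda>b. m_V f (gibbs_measure V b)"] by simp
qed

lemma integral_mult_exp_split_bound:
  assumes V: "orlicz V" and f: "orlicz f"
    and f_int: "\<And>a. a < 0 \<Longrightarrow> integrable lborel (\<lambda>x. f x * exp (a * V x))"
    and "0 < \<delta>" "b \<le> -1"
  shows "(\<integral>x. f x * exp (b * V x) \<partial>lborel) \<le>
    f \<delta> * partition_function V b + exp ((b + 1) * V \<delta>) * (\<integral>x. f x * exp (- V x) \<partial>lborel)"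
proof -
  have "f x * exp (b * V x) \<le> f \<delta> * exp (b * V x) + exp ((b + 1) * V \<delta>) * (f x * exp (- V x))" for x
  proof (cases "\<bar>x\<bar> \<le> \<delta>")
    case True
    then have "f x * exp (b * V x) \<le> f \<delta> * exp (b * V x)"
      using f \<open>0 < \<delta>\<close> by (intro mult_right_mono) (auto simp: orlicz_le_iff)
    then show ?thesis
      using f by (simp add: orlicz_nonneg add_increasing2)
  next
    case False
    then have "(b + 1) * V x \<le> (b + 1) * V \<delta>"
      using V \<open>0 < \<delta>\<close> \<open>b \<le> -1\<close> by (intro mult_left_mono_neg) (auto simp: orlicz_le_iff)
    then have "f x * exp (- V x) * exp ((b + 1) * V x) \<le> f x * exp (- V x) * exp ((b + 1) * V \<delta>)"
      using f by (intro mult_left_mono) (auto simp: orlicz_nonneg)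
    moreover have "exp (- V x) * exp ((b + 1) * V x) = exp (b * V x)"
      by (simp add: algebra_simps flip: exp_add)
    ultimately show ?thesis
      using f by (simp add: orlicz_nonneg mult_ac add_increasing)
  qed
  then have "(\<integral>x. f x * exp (b * V x) \<partial>lborel) \<le>
      (\<integral>x. f \<delta> * exp (b * V x) + exp ((b + 1) * V \<delta>) * (f x * exp (- V x)) \<partial>lborel)"
    using V f_int[of b] f_int[of "-1"] \<open>b \<le> -1\<close> orlicz_integrable_exp[of V b]
    by (intro integral_mono) auto
  also have "\<dots> = f \<delta> * partition_function V b + exp ((b + 1) * V \<delta>) * (\<integral>x. f x * exp (- V x) \<partial>lborel)"
    using V f_int[of "-1"] \<open>b \<le> -1\<close> orlicz_integrable_exp[of V b]
    by (simp add: partition_function_def)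
  finally show ?thesis .
qed

lemma gibbs_moment_concentration_bound:
  assumes V: "orlicz V" and f: "orlicz f"
    and f_int: "\<And>a. a < 0 \<Longrightarrow> integrable lborel (\<lambda>x. f x * exp (a * V x))"
    and "0 < \<delta>" "b \<le> -1"
  shows "m_V f (gibbs_measure V b) \<le>
    f \<delta> + exp (b * (V \<delta> - V (\<delta> / 2))) * (exp (V \<delta>) * (\<integral>x. f x * exp (- V x) \<partial>lborel) / \<delta>)"
proof -
  let ?Z = "partition_function V b" and ?I = "\<integral>x. f x * exp (- V x) \<partial>lborel"
  have "0 \<le> ?I"
    using f by (intro integral_nonneg_AE) (simp add: orlicz_nonneg)
  have "0 < ?Z" "\<delta> * exp (b * V (\<delta> / 2)) \<le> ?Z"
    using assms partition_function_lower_bound[of V b "\<delta> / 2"]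
    by (auto intro: partition_function_pos)
  have "m_V f (gibbs_measure V b) \<le> (f \<delta> * ?Z + exp ((b + 1) * V \<delta>) * ?I) / ?Z"
    using assms \<open>0 < ?Z\<close>
    by (simp add: m_V_gibbs_measure orlicz_borel_measurable[OF f] divide_right_mono
        integral_mult_exp_split_bound[OF V f])
  also have "\<dots> \<le> f \<delta> + exp ((b + 1) * V \<delta>) * ?I / (\<delta> * exp (b * V (\<delta> / 2)))"
    using \<open>0 < ?Z\<close> \<open>\<delta> * exp (b * V (\<delta> / 2)) \<le> ?Z\<close> \<open>0 \<le> ?I\<close> \<open>0 < \<delta>\<close>
    by (simp add: add_divide_distrib divide_left_mono)
  also have "\<dots> = f \<delta> + exp (b * (V \<delta> - V (\<delta> / 2))) * (exp (V \<delta>) * ?I / \<delta>)"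
    by (simp add: algebra_simps exp_add exp_diff)
  finally show ?thesis .
qed

lemma gibbs_moment_tendsto_zero:
  assumes V: "orlicz V" and f: "orlicz f"
    and f_int: "\<And>a. a < 0 \<Longrightarrow> integrable lborel (\<lambda>x. f x * exp (a * V x))"
  shows "((\<lambda>b. m_V f (gibbs_measure V b)) \<longlongrightarrow> 0) at_bot"
proof (rule order_tendstoI)
  fix e :: real
  assume "e < 0"
  have "0 \<le> m_V f (gibbs_measure V b)" for b
    unfolding m_V_def using f by (intro integral_nonneg_AE) (simp add: orlicz_nonneg)
  then show "\<forall>\<^sub>F b in at_bot. e < m_V f (gibbs_measure V b)"
    using \<open>e < 0\<close> by (intro always_eventually) (auto intro: less_le_trans)
next
  fix e :: real
  assume "0 < e"
  then obtain \<delta> where "0 < \<delta>" "f \<delta> < e / 2"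
    using orlicz_small_value[OF f, of "e / 2"] by auto
  define d where "d = V \<delta> - V (\<delta> / 2)"
  define K where "K = exp (V \<delta>) * (\<integral>x. f x * exp (- V x) \<partial>lborel) / \<delta>"
  have "0 < d"
    using V \<open>0 < \<delta>\<close> by (simp add: d_def orlicz_less_iff)
  then have "((\<lambda>b. exp (b * d) * K) \<longlongrightarrow> 0) at_bot"
    by real_asymp
  then have "\<forall>\<^sub>F b in at_bot. exp (b * d) * K < e / 2"
    using \<open>0 < e\<close> by (intro order_tendstoD) auto
  moreover have "\<forall>\<^sub>F b in at_bot. b \<le> (-1 :: real)"
    by simp
  ultimately show "\<forall>\<^sub>F b in at_bot. m_V f (gibbs_measure V b) < e"
  proof eventually_elim
    case (elim b)
    then show ?case
      using gibbs_moment_concentration_bound[OF V f f_int \<open>0 < \<delta>\<close>, of b] \<open>f \<delta> < e / 2\<close>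
      unfolding d_def K_def by linarith
  qed
qed

section \<open>The critical radius\<close>

lemma m_V_le_add_const:
  assumes "prob_space \<mu>" "integrable \<mu> f" "integrable \<mu> g" "\<And>x. g x \<le> f x + C"
  shows "m_V g \<mu> \<le> m_V f \<mu> + C"
proof -
  interpret prob_space \<mu>
    by (rule assms(1))
  have "m_V g \<mu> \<le> (\<integral>x. f x + C \<partial>\<mu>)"
    unfolding m_V_def using assms(2-4) by (intro integral_mono) auto
  also have "\<dots> = m_V f \<mu> + C"
    using assms(2) by (simp add: m_V_def prob_space)
  finally show ?thesis .
qed

lemma gibbs_moment_ge_energy_sub_const:
  assumes V1: "orlicz V1" and V2: "orlicz V2"
    and "filterlim (\<lambda>x. V1 x / V2 x) at_top at_infinity"
    and V1_int: "\<And>a. a < 0 \<Longrightarrow> integrable lborel (\<lambda>x. V1 x * exp (a * V2 x))"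
  shows "\<exists>C. \<forall>b<0. m_V V2 (gibbs_measure V2 b) - C \<le> m_V V1 (gibbs_measure V2 b)"
proof -
  obtain C where "\<And>x. V2 x \<le> V1 x + C"
    using orlicz_le_add_const[OF V1 V2 assms(3)] by blast
  then have "m_V V2 (gibbs_measure V2 b) \<le> m_V V1 (gibbs_measure V2 b) + C" if "b < 0" for b
    using that V1 V2 V1_int orlicz_integrable_mult_exp[OF V2]
    by (intro m_V_le_add_const)
       (simp_all add: prob_space_gibbs_measure integrable_gibbs_measure_iff orlicz_borel_measurable)
  then show ?thesis
    by (intro exI[of _ C]) (simp add: algebra_simps)
qed

lemma strict_mono_on_right_inverse_mono:
  fixes G \<alpha> :: "'a::linorder \<Rightarrow> 'a"
  assumes G: "strict_mono_on A G" and \<alpha>: "\<And>R. R \<in> B \<Longrightarrow> \<alpha> R \<in> A \<and> G (\<alpha> R) = R"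
    and "R \<in> B" "R' \<in> B" "R \<le> R'"
  shows "\<alpha> R \<le> \<alpha> R'"
proof (rule ccontr)
  assume "\<not> \<alpha> R \<le> \<alpha> R'"
  then have "G (\<alpha> R') < G (\<alpha> R)"
    using \<alpha>[OF \<open>R \<in> B\<close>] \<alpha>[OF \<open>R' \<in> B\<close>] by (intro strict_mono_onD[OF G]) auto
  then show False
    using \<alpha>[OF \<open>R \<in> B\<close>] \<alpha>[OF \<open>R' \<in> B\<close>] \<open>R \<le> R'\<close> by simp
qed

lemma level_crossing_of_reparametrization:
  fixes F G \<alpha> :: "real \<Rightarrow> real"
  assumes F_mono: "mono_on {..<0} F" and F_cont: "continuous_on {..<0} F"
    and G_mono: "strict_mono_on {..<0} G" and G_nonneg: "\<And>b. b < 0 \<Longrightarrow> 0 \<le> G b"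
    and \<alpha>: "\<And>R. 0 < R \<Longrightarrow> \<alpha> R < 0 \<and> G (\<alpha> R) = R"
    and "b < 0" "F b < y" "0 < S" "y \<le> F (\<alpha> S)"
  shows "\<exists>Rb>0. F (\<alpha> Rb) = y \<and> (\<forall>R. 0 < R \<and> R \<le> Rb \<longrightarrow> F (\<alpha> R) \<le> F (\<alpha> Rb))"
proof -
  define b1 where "b1 = \<alpha> S"
  have "b1 < 0"
    using \<alpha>[OF \<open>0 < S\<close>] by (simp add: b1_def)
  have "b \<le> b1"
  proof (rule ccontr)
    assume "\<not> b \<le> b1"
    then have "F b1 \<le> F b"
      using \<open>b < 0\<close> \<open>b1 < 0\<close> by (intro mono_onD[OF F_mono]) auto
    then show False
      using \<open>F b < y\<close> \<open>y \<le> F (\<alpha> S)\<close> by (simp add: b1_def)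
  qed
  moreover have "continuous_on {b..b1} F"
    by (rule continuous_on_subset[OF F_cont]) (use \<open>b1 < 0\<close> in auto)
  ultimately have "\<exists>bs. b \<le> bs \<and> bs \<le> b1 \<and> F bs = y"
    using \<open>F b < y\<close> \<open>y \<le> F (\<alpha> S)\<close> by (intro IVT') (auto simp: b1_def)
  then obtain bs where "bs \<le> b1" "F bs = y"
    by blast
  then have "bs < 0"
    using \<open>b1 < 0\<close> by simp
  define Rb where "Rb = G bs"
  have "G (bs - 1) < G bs"
    by (rule strict_mono_onD[OF G_mono]) (use \<open>bs < 0\<close> in auto)
  moreover have "0 \<le> G (bs - 1)"
    using \<open>bs < 0\<close> by (intro G_nonneg) simp
  ultimately have "0 < Rb"
    unfolding Rb_def by linarith
  have "\<alpha> Rb < 0" "G (\<alpha> Rb) = Rb"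
    using \<alpha>[OF \<open>0 < Rb\<close>] by auto
  have "\<alpha> Rb = bs"
    by (rule strict_mono_on_eqD[OF G_mono]) (use \<open>G (\<alpha> Rb) = Rb\<close> \<open>bs < 0\<close> \<open>\<alpha> Rb < 0\<close> in \<open>auto simp: Rb_def\<close>)
  have "F (\<alpha> R) \<le> F (\<alpha> Rb)" if "0 < R" "R \<le> Rb" for R
  proof (rule mono_onD[OF F_mono])
    show "\<alpha> R \<le> \<alpha> Rb"
      by (rule strict_mono_on_right_inverse_mono[OF G_mono, where B = "{0<..}"])
         (use \<alpha> that \<open>0 < Rb\<close> in auto)
  qed (use \<alpha> that \<open>0 < Rb\<close> in auto)
  then show ?thesis
    using \<open>0 < Rb\<close> \<open>\<alpha> Rb = bs\<close> \<open>F bs = y\<close> by blast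
qed

theorem mainTheorem5:
  fixes V1 V2 :: "real \<Rightarrow> real" and \<alpha> :: "real \<Rightarrow> real"
  assumes "orlicz V1" and "orlicz V2"
    and "filterlim (\<lambda>x. V1 x / V2 x) at_top at_infinity"
    and "\<And>a. a < 0 \<Longrightarrow> integrable lborel (\<lambda>x. V1 x * exp (a * V2 x))"
    and "\<And>R. R > 0 \<Longrightarrow> \<alpha> R < 0 \<and> R = m_V V2 (gibbs_measure V2 (\<alpha> R))"
  shows "\<exists>Rb>0. m_V V1 (gibbs_measure V2 (\<alpha> Rb)) = 1 \<and>
           (\<forall>R. 0 < R \<and> R \<le> Rb \<longrightarrow>
              m_V V1 (gibbs_measure V2 (\<alpha> R)) \<le> m_V V1 (gibbs_measure V2 (\<alpha> Rb)))"
proof -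
  note V1 = \<open>orlicz V1\<close> and V2 = \<open>orlicz V2\<close> and V1_int = assms(4)
  let ?F = "\<lambda>b. m_V V1 (gibbs_measure V2 b)" and ?G = "\<lambda>b. m_V V2 (gibbs_measure V2 b)"
  have \<alpha>: "\<alpha> R < 0 \<and> ?G (\<alpha> R) = R" if "0 < R" for R
    using assms(5)[OF that] by simp
  have "(?F \<longlongrightarrow> 0) at_bot"
    using V2 V1 V1_int by (rule gibbs_moment_tendsto_zero)
  then obtain N where N: "\<And>b. b \<le> N \<Longrightarrow> ?F b < 1"
    using order_tendstoD(2)[of ?F 0 at_bot 1] by (auto simp: eventually_at_bot_linorder)
  obtain C where C: "\<And>b. b < 0 \<Longrightarrow> ?G b - C \<le> ?F b"
    using gibbs_moment_ge_energy_sub_const[OF V1 V2 assms(3) V1_int] by blast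
  define R where "R = max 1 (C + 1)"
  show ?thesis
  proof (rule level_crossing_of_reparametrization[where F = ?F and G = ?G and b = "min N (-1)" and S = R])
    show "mono_on {..<0} ?F"
      by (rule gibbs_moment_mono[OF V2 orlicz_borel_measurable[OF V1] _ V1_int])
         (simp add: V1 V2 orlicz_less_iff orlicz_le_iff)
    show "continuous_on {..<0} ?F"
      using V2 orlicz_borel_measurable[OF V1] V1_int by (rule continuous_on_gibbs_moment)
    show "strict_mono_on {..<0} ?G"
      using V2 by (rule gibbs_energy_strict_mono)
    show "0 \<le> ?G b" for b
      unfolding m_V_def using V2 by (intro integral_nonneg_AE) (simp add: orlicz_nonneg)
    show "1 \<le> ?F (\<alpha> R)"
      using C[of "\<alpha> R"] \<alpha>[of R] by (simp add: R_def)
  qed (use \<alpha> N in \<open>auto simp: R_def\<close>)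
qed

end
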